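(* Let $N\ge 2$ and let $\mathcal{A}$ be an $M\times N$ circular Florentine rectangle over $\mathbb{Z}_N$ with rows $\pi_0,\dots,\pi_{M-1}$. For each $i$ let $\pi_i^{-1}$ denote the inverse permutation of $\pi_i$. Then each $\pi_i^{-1}$ is a permutation of $\mathbb{Z}_N$, and for all $0\le i\neq r\le M-1$ the map $x\mapsto \pi_i^{-1}(x)-\pi_r^{-1}(x) \pmod N$ is a permutation of $\mathbb{Z}_N$.
   Context: An $M\times N$ circular Florentine rectangle (CFR) over $\mathbb{Z}_N$ is an $M\times N$ array whose rows, viewed as maps $\pi_i:\mathbb{Z}_N\to\mathbb{Z}_N$ ($\pi_i(x)$ is the entry in row $i$, column $x$), are permutations of $\mathbb{Z}_N$, and such that for every $m\in\mathbb{Z}_N\setminus\{0\}$ and all $0\le i,j\le M-1$, $x,y\in\mathbb{Z}_N$, one has $(\pi_i(x),\pi_i(x+m))=(\pi_j(y),\pi_j(y+m))$ (indices modulo $N$) if and only if $i=j$ and $x=y$. *)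

theory Defs
  imports Main
begin

text \<open>Z_N is modelled by the carrier {0..<N} of naturals with arithmetic mod N.
  An M x N array is a function pi :: nat => nat => nat; row i (i < M) is the
  map x \<mapsto> pi i x on {0..<N}.\<close>

definition CFR :: "nat \<Rightarrow> nat \<Rightarrow> (nat \<Rightarrow> nat \<Rightarrow> nat) \<Rightarrow> bool" where
  "CFR M N \<pi> \<longleftrightarrow>
     (\<forall>i<M. bij_betw (\<pi> i) {0..<N} {0..<N}) \<and>
     (\<forall>m\<in>{1..<N}. \<forall>i<M. \<forall>j<M. \<forall>x<N. \<forall>y<N.
        ((\<pi> i x, \<pi> i ((x + m) mod N)) = (\<pi> j y, \<pi> j ((y + m) mod N)))
        \<longleftrightarrow> (i = j \<and> x = y))"

end

theory Submission
  imports Defs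
begin

text \<open>Suppose \<open>\<pi>\<^sub>i\<^sup>-\<^sup>1 x - \<pi>\<^sub>r\<^sup>-\<^sup>1 x \<equiv> \<pi>\<^sub>i\<^sup>-\<^sup>1 y - \<pi>\<^sub>r\<^sup>-\<^sup>1 y\<close> for \<open>x \<noteq> y\<close>.
  Then \<open>m = \<pi>\<^sub>i\<^sup>-\<^sup>1 y - \<pi>\<^sub>i\<^sup>-\<^sup>1 x = \<pi>\<^sub>r\<^sup>-\<^sup>1 y - \<pi>\<^sub>r\<^sup>-\<^sup>1 x\<close> is a nonzero
  shift at which the ordered pair \<open>(x, y)\<close> occurs both in row \<open>i\<close> and in row \<open>r\<close>, so the
  Florentine property forces \<open>i = r\<close>.\<close>

lemma nat_mod_less:
  assumes "0 < N"
  shows "nat (k mod int N) < N"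
  using assms by (simp add: nat_less_iff)

lemma add_nat_diff_mod:
  assumes "c < N" "d < N"
  shows "(c + nat ((int d - int c) mod int N)) mod N = d"
proof -
  have "int ((c + nat ((int d - int c) mod int N)) mod N)
      = (int c + (int d - int c) mod int N) mod int N"
    using assms by (simp add: of_nat_mod)
  also have "\<dots> = int d"
    using assms by (simp add: mod_add_right_eq)
  finally show ?thesis by simp
qed

lemma diff_mod_eq_0_iff:
  assumes "a < N" "b < N"
  shows "(int b - int a) mod int N = 0 \<longleftrightarrow> a = b"
proof -
  have "(int b - int a) mod int N = 0 \<longleftrightarrow> int b mod int N = int a mod int N"
    by (simp add: mod_eq_dvd_iff mod_eq_0_iff_dvd)
  also have "\<dots> \<longleftrightarrow> a = b"
    using assms by auto
  finally show ?thesis .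
qed

lemma diff_mod_eq_swap:
  fixes a b c d n :: int
  assumes "(a - b) mod n = (c - d) mod n"
  shows "(c - a) mod n = (d - b) mod n"
proof -
  have "n dvd (a - b) - (c - d)" using assms by (simp add: mod_eq_dvd_iff)
  then have "n dvd (c - a) - (d - b)" by (metis dvd_minus_iff minus_diff_eq diff_diff_eq2 add.commute)
  then show ?thesis by (simp add: mod_eq_dvd_iff)
qed

lemma bij_betw_nat_mod_if_inj:
  fixes h :: "nat \<Rightarrow> int"
  assumes inj: "\<And>x y. x < N \<Longrightarrow> y < N \<Longrightarrow> h x mod int N = h y mod int N \<Longrightarrow> x = y"
  shows "bij_betw (\<lambda>x. nat (h x mod int N)) {0..<N} {0..<N}"
proof -
  have into: "(\<lambda>x. nat (h x mod int N)) ` {0..<N} \<subseteq> {0..<N}"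
    using nat_mod_less by fastforce
  have "inj_on (\<lambda>x. nat (h x mod int N)) {0..<N}"
  proof (rule inj_onI)
    fix x y
    assume "x \<in> {0..<N}" "y \<in> {0..<N}" "nat (h x mod int N) = nat (h y mod int N)"
    then show "x = y"
      using inj by (simp add: nat_eq_iff2)
  qed
  then show ?thesis
    using endo_inj_surj[OF _ into] by (simp add: bij_betw_def)
qed

lemma CFR_row_bij:
  assumes "CFR M N \<pi>" "i < M"
  shows "bij_betw (\<pi> i) {0..<N} {0..<N}"
  using assms unfolding CFR_def by blast

lemma CFR_same_pair_same_distance:
  assumes "CFR M N \<pi>" "i < M" "r < M" "a < N" "b < N" "c < N" "d < N" "a \<noteq> b"
    and pair: "\<pi> i a = \<pi> r c" "\<pi> i b = \<pi> r d"
    and dist: "(int b - int a) mod int N = (int d - int c) mod int N"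
  shows "i = r \<and> a = c"
proof -
  define m where "m = nat ((int b - int a) mod int N)"
  have "0 < N" using \<open>a < N\<close> by simp
  have "(int b - int a) mod int N \<noteq> 0"
    using diff_mod_eq_0_iff[OF \<open>a < N\<close> \<open>b < N\<close>] \<open>a \<noteq> b\<close> by simp
  moreover have "(int b - int a) mod int N \<ge> 0"
    using \<open>0 < N\<close> by simp
  ultimately have "m \<noteq> 0"
    unfolding m_def by linarith
  then have m: "m \<in> {1..<N}"
    using nat_mod_less[OF \<open>0 < N\<close>] unfolding m_def by simp
  have "(a + m) mod N = b"
    unfolding m_def by (rule add_nat_diff_mod[OF \<open>a < N\<close> \<open>b < N\<close>])
  moreover have "(c + m) mod N = d"
    unfolding m_def dist by (rule add_nat_diff_mod[OF \<open>c < N\<close> \<open>d < N\<close>])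
  ultimately have "(\<pi> i a, \<pi> i ((a + m) mod N)) = (\<pi> r c, \<pi> r ((c + m) mod N))"
    using pair by simp
  then show ?thesis
    using assms(1-4,6) m unfolding CFR_def by blast
qed

lemma CFR_inv_diff_bij:
  assumes "CFR M N \<pi>" "i < M" "r < M" "i \<noteq> r"
  defines "f \<equiv> inv_into {0..<N} (\<pi> i)" and "g \<equiv> inv_into {0..<N} (\<pi> r)"
  shows "bij_betw (\<lambda>x. nat ((int (f x) - int (g x)) mod int N)) {0..<N} {0..<N}"
proof (rule bij_betw_nat_mod_if_inj)
  have rows: "bij_betw (\<pi> i) {0..<N} {0..<N}" "bij_betw (\<pi> r) {0..<N} {0..<N}"
    using CFR_row_bij assms(1-3) by blast+
  have f: "\<pi> i (f x) = x" "f x < N" if "x < N" for x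
    using that bij_betw_inv_into_right[OF rows(1)] bij_betw_apply[OF bij_betw_inv_into[OF rows(1)]]
    unfolding f_def by auto
  have g: "\<pi> r (g x) = x" "g x < N" if "x < N" for x
    using that bij_betw_inv_into_right[OF rows(2)] bij_betw_apply[OF bij_betw_inv_into[OF rows(2)]]
    unfolding g_def by auto
  fix x y
  assume xy: "x < N" "y < N"
    and eq: "(int (f x) - int (g x)) mod int N = (int (f y) - int (g y)) mod int N"
  show "x = y"
  proof (rule ccontr)
    assume "x \<noteq> y"
    then have "f x \<noteq> f y"
      using f(1)[OF xy(1)] f(1)[OF xy(2)] by auto
    moreover have "\<pi> i (f x) = \<pi> r (g x)" "\<pi> i (f y) = \<pi> r (g y)"
      using f g xy by simp_all
    ultimately have "i = r \<and> f x = g x"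
      by (rule CFR_same_pair_same_distance[OF assms(1-3) f(2)[OF xy(1)] f(2)[OF xy(2)]
          g(2)[OF xy(1)] g(2)[OF xy(2)] _ _ _ diff_mod_eq_swap[OF eq]])
    then show False using \<open>i \<noteq> r\<close> by simp
  qed
qed

theorem lemma4:
  fixes M N :: nat and \<pi> :: "nat \<Rightarrow> nat \<Rightarrow> nat"
  assumes "N \<ge> 2" and "CFR M N \<pi>"
  shows "(\<forall>i<M. bij_betw (inv_into {0..<N} (\<pi> i)) {0..<N} {0..<N}) \<and>
         (\<forall>i<M. \<forall>r<M. i \<noteq> r \<longrightarrow>
            bij_betw (\<lambda>x. nat ((int (inv_into {0..<N} (\<pi> i) x)
                                 - int (inv_into {0..<N} (\<pi> r) x)) mod int N))
                     {0..<N} {0..<N})"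
  using CFR_row_bij[OF assms(2)] bij_betw_inv_into CFR_inv_diff_bij[OF assms(2)] by blast

end
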